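(* If condition $(C_k)$ holds for every $k\in I_n$, then for all $i,j\in I_n$ with $i\ne j$ one has $a_{ii}>a_{ji}$, $a_{jj}>a_{ij}$, and $$\frac{a_{\ell i}(a_{jj}-a_{ij})+a_{\ell j}(a_{ii}-a_{ji})}{a_{ii}a_{jj}-a_{ij}a_{ji}}<1\quad\text{for all }\ell\in I_n\setminus\{i,j\},$$ and moreover $U_i=\max\left\{\frac{a_{jj}-a_{ij}}{a_{ii}a_{jj}-a_{ij}a_{ji}}: j\in I_n\setminus\{i\}\right\}$ for every $i\in I_n$.
   Context: Fix $n\ge 2$ and $I_m=\{1,\dots,m\}$. Consider the Lotka–Volterra system $x_i'=b_ix_i(1-\alpha_ix)$, $i\in I_n$, where $b_i>0$, $\alpha_i=(a_{i1},\dots,a_{in})$ with $a_{ii}>0$ and $a_{ij}\ge 0$, on $\mathbb{R}^n_+$. For $u\le v$ (componentwise), $[u,v]=\{x\in\mathbb{R}^n_+:u\le x\le v\}$. For $J\subset I_n$, $u^J_i=u_i$ for $i\in J$ and $0$ otherwise. $\gamma_i=\{x\in\mathbb{R}^n_+:\alpha_ix=1\}$. Define $U$ componentwise by: $U_i=a_{ii}^{-1}$ if $a_{ii}\le a_{ji}$ or $a_{ij}=0$ for some $j\ne i$; otherwise $U_i=0$ if $a_{ji}<a_{ii}$ and $a_{jk}\le a_{ik}$ for all $j,k\in I_n\setminus\{i\}$; otherwise $U_i=\max\{\frac{a_{kj}-a_{ij}}{a_{ii}a_{kj}-a_{ij}a_{ki}}: j,k\in I_n\setminus\{i\},\ a_{kj}>a_{ij}\}$.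 Condition $(C_k)$: either $\alpha_kU^{I_n\setminus\{k\}}<1$, or every $x\in\gamma_k\cap[0,U^{I_n\setminus\{k\}}]$ satisfies $\alpha_jx>1$ for all $j\in I_n\setminus\{k\}$. *)

theory Defs
  imports Complex_Main
begin

text \<open>Interaction matrix a :: nat => nat => real, indices in I_n = {1..n};
  points of R^n_+ are functions x :: nat => real (only indices in {1..n} matter).\<close>

definition alphaLV :: "nat \<Rightarrow> (nat \<Rightarrow> nat \<Rightarrow> real) \<Rightarrow> nat \<Rightarrow> (nat \<Rightarrow> real) \<Rightarrow> real" where
  "alphaLV n a i x = (\<Sum>j\<in>{1..n}. a i j * x j)"

definition restrictJ :: "nat set \<Rightarrow> (nat \<Rightarrow> real) \<Rightarrow> (nat \<Rightarrow> real)" where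
  "restrictJ J u = (\<lambda>i. if i \<in> J then u i else 0)"

definition Ubound :: "nat \<Rightarrow> (nat \<Rightarrow> nat \<Rightarrow> real) \<Rightarrow> nat \<Rightarrow> real" where
  "Ubound n a i =
    (if \<exists>j\<in>{1..n} - {i}. a i i \<le> a j i \<or> a i j = 0 then 1 / a i i
     else if (\<forall>j\<in>{1..n} - {i}. a j i < a i i) \<and>
             (\<forall>j\<in>{1..n} - {i}. \<forall>k\<in>{1..n} - {i}. a j k \<le> a i k) then 0
     else Max {(a k j - a i j) / (a i i * a k j - a i j * a k i) | j k.
                 j \<in> {1..n} - {i} \<and> k \<in> {1..n} - {i} \<and> a k j > a i j})"

definition condC :: "nat \<Rightarrow> (nat \<Rightarrow> nat \<Rightarrow> real) \<Rightarrow> nat \<Rightarrow> bool" where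
  "condC n a k \<longleftrightarrow>
     alphaLV n a k (restrictJ ({1..n} - {k}) (Ubound n a)) < 1 \<or>
     (\<forall>x. (\<forall>i\<in>{1..n}. 0 \<le> x i \<and> x i \<le> restrictJ ({1..n} - {k}) (Ubound n a) i)
            \<and> alphaLV n a k x = 1
          \<longrightarrow> (\<forall>j\<in>{1..n} - {k}. alphaLV n a j x > 1))"

end

theory Submission
  imports Defs
begin

text \<open>
  For species i \<noteq> j the planar subsystem on {i, j} has the
  equilibrium with coordinates pairEq a i j and pairEq a j i.  Condition (C_k)
  says: every point of the box [0, U restricted to I_n - {k}] lying on the
  nullcline of species k lies strictly above every other nullcline.  Each
  assertion of the theorem follows by testing (C_k) on a suitable point:
  \<^item> the point (1 / a_ji) e_i tested with (C_j) gives a_ji < a_ii;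
  \<^item> once a_ji < a_ii and a_ij < a_jj hold, the planar equilibrium lies in the
    box, and its rescaling onto the nullcline of a third species l, tested
    with (C_l), yields the inequality involving l;
  \<^item> that inequality shows that every candidate defining U_i in the third
    branch of its definition is dominated by some pairEq a i j, giving the
    formula for U_i.
\<close>

lemma alphaLV_single:
  assumes "i \<in> {1..n}"
  shows "alphaLV n a l (\<lambda>m. if m = i then p else 0) = a l i * p"
  using assms unfolding alphaLV_def
  by (simp add: if_distrib[of "\<lambda>x. a l _ * x"] sum.delta cong: if_cong)

lemma alphaLV_pair:
  assumes "i \<in> {1..n}" "j \<in> {1..n}"
  shows "alphaLV n a l (\<lambda>m. (if m = i then p else 0) + (if m = j then q else 0))
           = a l i * p + a l j * q"
  using assms unfolding alphaLV_def
  by (simp add: distrib_left sum.distrib if_distrib[of "\<lambda>x. a l _ * x"] sum.delta cong: if_cong)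

subsection \<open>Planar equilibria\<close>

text \<open>The i-th coordinate of the equilibrium of the subsystem on species i, j,
  i.e. of the solution of a_ii x_i + a_ij x_j = 1, a_ji x_i + a_jj x_j = 1.\<close>
definition pairEq :: "(nat \<Rightarrow> nat \<Rightarrow> real) \<Rightarrow> nat \<Rightarrow> nat \<Rightarrow> real" where
  "pairEq a i j = (a j j - a i j) / (a i i * a j j - a i j * a j i)"

lemma pairEq_swap:
  "pairEq a j i = (a i i - a j i) / (a i i * a j j - a i j * a j i)"
  unfolding pairEq_def by (simp add: mult.commute)

lemma pairEq_solves:
  assumes "a i i * a j j - a i j * a j i \<noteq> 0"
  shows "a i i * pairEq a i j + a i j * pairEq a j i = 1"
proof -
  have "a i i * pairEq a i j + a i j * pairEq a j i
          = (a i i * (a j j - a i j) + a i j * (a i i - a j i)) / (a i i * a j j - a i j * a j i)"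
    unfolding pairEq_swap[where i = i and j = j] pairEq_def[of a i j] by (simp add: add_divide_distrib)
  also have "\<dots> = 1" using assms by (simp add: algebra_simps)
  finally show ?thesis .
qed

lemma det_pos:
  fixes aii ajj aij aji :: real
  assumes "0 < aii" "0 \<le> aij" "aji \<le> aii" "aij < ajj"
  shows "0 < aii * ajj - aij * aji"
proof -
  have "aij * aji \<le> aij * aii" using assms by (intro mult_left_mono) auto
  moreover have "aii * aij < aii * ajj" using assms by (intro mult_strict_left_mono) auto
  ultimately show ?thesis by (simp add: mult.commute)
qed

lemma pairEq_le_inv:
  fixes aii ajj aij aji :: real
  assumes "0 < aii" "0 \<le> aij" "aji < aii" "aij < ajj"
  shows "(ajj - aij) / (aii * ajj - aij * aji) \<le> 1 / aii"
proof -
  have D: "0 < aii * ajj - aij * aji" using det_pos assms by auto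
  have "aij * aji \<le> aij * aii" using assms by (intro mult_left_mono) auto
  then have "(ajj - aij) * aii \<le> 1 * (aii * ajj - aij * aji)" by (simp add: algebra_simps)
  then show ?thesis using D assms(1) by (simp add: divide_simps)
qed

text \<open>Comparison of two candidate quotients: if the equilibrium of the (i,j)
  subsystem lies below the nullcline of species k, then the (j,k)-candidate for
  U_i is bounded by the (j,j)-candidate.  Here p = a_ij, c = a_kj, q = a_ki, r = a_ji.\<close>
lemma candidate_le:
  fixes aii ajj p r q c :: real
  assumes "0 \<le> p" "0 < aii * c - p * q" "0 < aii * ajj - p * r"
    and "q * (ajj - p) + c * (aii - r) < aii * ajj - p * r"
  shows "(c - p) / (aii * c - p * q) \<le> (ajj - p) / (aii * ajj - p * r)"
proof -
  have "(ajj - p) * (aii * c - p * q) - (c - p) * (aii * ajj - p * r)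
          = p * ((aii * ajj - p * r) - q * (ajj - p) - c * (aii - r))"
    by (simp add: algebra_simps)
  moreover have "p * ((aii * ajj - p * r) - q * (ajj - p) - c * (aii - r)) \<ge> 0"
    using assms(1,4) by (intro mult_nonneg_nonneg) auto
  ultimately have "(c - p) * (aii * ajj - p * r) \<le> (ajj - p) * (aii * c - p * q)" by linarith
  then show ?thesis using assms(2,3) by (simp add: divide_simps mult.commute)
qed

subsection \<open>The bound U\<close>

definition Ucand :: "nat \<Rightarrow> (nat \<Rightarrow> nat \<Rightarrow> real) \<Rightarrow> nat \<Rightarrow> real set" where
  "Ucand n a i = {(a k j - a i j) / (a i i * a k j - a i j * a k i) | j k.
                    j \<in> {1..n} - {i} \<and> k \<in> {1..n} - {i} \<and> a k j > a i j}"

lemma finite_Ucand: "finite (Ucand n a i)"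
proof -
  have "Ucand n a i \<subseteq> (\<lambda>(j, k). (a k j - a i j) / (a i i * a k j - a i j * a k i)) ` ({1..n} \<times> {1..n})"
    unfolding Ucand_def by auto
  then show ?thesis by (rule finite_subset) auto
qed

lemma Ubound_first:
  "\<exists>j\<in>{1..n} - {i}. a i i \<le> a j i \<or> a i j = 0 \<Longrightarrow> Ubound n a i = 1 / a i i"
  by (simp add: Ubound_def)

lemma Ubound_third:
  assumes "\<not> (\<exists>j\<in>{1..n} - {i}. a i i \<le> a j i \<or> a i j = 0)"
    and "\<not> ((\<forall>j\<in>{1..n} - {i}. a j i < a i i) \<and>
            (\<forall>j\<in>{1..n} - {i}. \<forall>k\<in>{1..n} - {i}. a j k \<le> a i k))"
  shows "Ubound n a i = Max (Ucand n a i)"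
  unfolding Ubound_def Ucand_def by (simp only: if_not_P[OF assms(1)] if_not_P[OF assms(2)])

definition inBox :: "nat \<Rightarrow> (nat \<Rightarrow> nat \<Rightarrow> real) \<Rightarrow> nat \<Rightarrow> (nat \<Rightarrow> real) \<Rightarrow> bool" where
  "inBox n a k x \<longleftrightarrow> (\<forall>m\<in>{1..n}. 0 \<le> x m \<and> x m \<le> restrictJ ({1..n} - {k}) (Ubound n a) m)"

lemma inBoxI:
  assumes "x k = 0" and "\<And>m. m \<in> {1..n} \<Longrightarrow> 0 \<le> x m \<and> x m \<le> Ubound n a m"
  shows "inBox n a k x"
  using assms unfolding inBox_def restrictJ_def by auto

locale competitive_LV =
  fixes n :: nat and a :: "nat \<Rightarrow> nat \<Rightarrow> real"
  assumes diag_pos: "\<forall>i\<in>{1..n}. a i i > 0"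
    and nonneg: "\<forall>i\<in>{1..n}. \<forall>j\<in>{1..n}. a i j \<ge> 0"
begin

text \<open>U is nonnegative, so coordinates vanishing at a test point never violate the box.\<close>
lemma Ubound_nonneg:
  assumes i: "i \<in> {1..n}"
  shows "0 \<le> Ubound n a i"
proof (cases "\<exists>j\<in>{1..n} - {i}. a i i \<le> a j i \<or> a i j = 0")
  case True
  have "a i i > 0" using diag_pos i by auto
  then show ?thesis using Ubound_first[OF True] by simp
next
  case c1: False
  show ?thesis
  proof (cases "(\<forall>j\<in>{1..n} - {i}. a j i < a i i) \<and>
                (\<forall>j\<in>{1..n} - {i}. \<forall>k\<in>{1..n} - {i}. a j k \<le> a i k)")
    case True
    with c1 show ?thesis by (simp add: Ubound_def)
  next
    case c2: False
    from c1 c2 obtain j k where jk: "j \<in> {1..n} - {i}" "k \<in> {1..n} - {i}" "a k j > a i j"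
      by (meson not_le)
    have "a k i < a i i" using c1 jk(2) by (meson not_le)
    then have "0 < a i i * a k j - a i j * a k i"
      using diag_pos nonneg i jk by (intro det_pos) auto
    then have "0 < (a k j - a i j) / (a i i * a k j - a i j * a k i)" using jk(3) by simp
    moreover have "(a k j - a i j) / (a i i * a k j - a i j * a k i) \<in> Ucand n a i"
      unfolding Ucand_def using jk by blast
    ultimately have "0 \<le> Max (Ucand n a i)"
      using finite_Ucand by (meson Max_ge less_le_trans less_imp_le)
    then show ?thesis using Ubound_third[OF c1 c2] by simp
  qed
qed

lemma inBox_support:
  assumes "x k = 0" and "\<And>m. m \<in> {1..n} \<Longrightarrow> x m \<noteq> 0 \<Longrightarrow> 0 \<le> x m \<and> x m \<le> Ubound n a m"
  shows "inBox n a k x"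
proof (rule inBoxI)
  show "x k = 0" by (fact assms(1))
next
  fix m assume m: "m \<in> {1..n}"
  show "0 \<le> x m \<and> x m \<le> Ubound n a m"
    using assms(2)[OF m] Ubound_nonneg[OF m] by (cases "x m = 0") auto
qed

text \<open>The first alternative of (C_k) makes the
  hypothesis impossible, by monotonicity of alphaLV in x.\<close>
lemma condC_excess:
  assumes C: "condC n a k" and k: "k \<in> {1..n}"
    and box: "inBox n a k x" and on_k: "alphaLV n a k x = 1" and m: "m \<in> {1..n} - {k}"
  shows "alphaLV n a m x > 1"
proof -
  have "alphaLV n a k x \<le> alphaLV n a k (restrictJ ({1..n} - {k}) (Ubound n a))"
    unfolding alphaLV_def
  proof (rule sum_mono)
    fix l assume "l \<in> {1..n}"
    then show "a k l * x l \<le> a k l * restrictJ ({1..n} - {k}) (Ubound n a) l"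
      using box nonneg k unfolding inBox_def by (intro mult_left_mono) auto
  qed
  with on_k C box m show ?thesis unfolding condC_def inBox_def by auto
qed

end

locale LV_condC = competitive_LV +
  assumes condC_all: "\<forall>k\<in>{1..n}. condC n a k"
begin

text \<open>Strict diagonal dominance in every column.  Otherwise U_i = 1 / a_ii, and the
  point (1 / a_ji) e_i lies on the nullcline of j inside its box but not above
  the nullcline of i, contradicting (C_j).\<close>
lemma diag_dominance:
  assumes i: "i \<in> {1..n}" and j: "j \<in> {1..n}" and ij: "i \<noteq> j"
  shows "a j i < a i i"
proof (rule ccontr)
  assume "\<not> a j i < a i i"
  then have ge: "a i i \<le> a j i" by simp
  have aii: "a i i > 0" using diag_pos i by auto
  with ge have aji: "a j i > 0" by simp
  have Ui: "Ubound n a i = 1 / a i i" using Ubound_first ge j ij by blast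
  define x where "x = (\<lambda>m. if m = i then 1 / a j i else (0::real))"
  have "1 / a j i \<le> 1 / a i i" using ge aii by (simp add: frac_le)
  then have box: "inBox n a j x"
    using ij Ui aji unfolding x_def by (intro inBox_support) auto
  have "alphaLV n a j x = 1" unfolding x_def using alphaLV_single[OF i] aji by simp
  with condC_all box j i ij have "alphaLV n a i x > 1" by (intro condC_excess) auto
  moreover have "alphaLV n a i x = a i i / a j i" unfolding x_def using alphaLV_single[OF i] by simp
  ultimately show False using ge aji by simp
qed

lemma pair_det_pos:
  assumes "i \<in> {1..n}" "j \<in> {1..n}" "i \<noteq> j"
  shows "0 < a i i * a j j - a i j * a j i"
  using assms diag_dominance[of i j] diag_dominance[of j i] diag_pos nonneg
  by (intro det_pos) auto

lemma pairEq_nonneg: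
  assumes "i \<in> {1..n}" "j \<in> {1..n}" "i \<noteq> j"
  shows "0 \<le> pairEq a i j"
  using assms pair_det_pos diag_dominance[of j i] unfolding pairEq_def
  by (intro divide_nonneg_pos) auto

lemma pairEq_le_Ubound:
  assumes i: "i \<in> {1..n}" and j: "j \<in> {1..n}" and ij: "i \<noteq> j"
  shows "pairEq a i j \<le> Ubound n a i"
proof -
  have dom: "a j i < a i i" "a i j < a j j"
    using diag_dominance i j ij by auto
  show ?thesis
  proof (cases "\<exists>j\<in>{1..n} - {i}. a i i \<le> a j i \<or> a i j = 0")
    case True
    then show ?thesis
      using Ubound_first pairEq_le_inv dom diag_pos nonneg i j unfolding pairEq_def by simp
  next
    case c1: False
    show ?thesis
    proof (cases "(\<forall>j\<in>{1..n} - {i}. a j i < a i i) \<and>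
                  (\<forall>j\<in>{1..n} - {i}. \<forall>k\<in>{1..n} - {i}. a j k \<le> a i k)")
      case True
      then have "a j j \<le> a i j" using j ij by auto
      with dom show ?thesis by simp
    next
      case c2: False
      have "pairEq a i j \<in> Ucand n a i"
        unfolding Ucand_def pairEq_def using j ij dom by blast
      then show ?thesis using Ubound_third[OF c1 c2] finite_Ucand by simp
    qed
  qed
qed

text \<open>Otherwise A = alpha_l(x*) \<ge> 1, and x*/A lies in the box of
  (C_l) on the nullcline of l while alpha_i(x*/A) = 1/A \<le> 1.\<close>
lemma pairEq_below_third:
  assumes i: "i \<in> {1..n}" and j: "j \<in> {1..n}" and ij: "i \<noteq> j"
    and l: "l \<in> {1..n} - {i, j}"
  shows "a l i * pairEq a i j + a l j * pairEq a j i < 1"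
proof (rule ccontr)
  define xi xj where "xi = pairEq a i j" and "xj = pairEq a j i"
  define A where "A = a l i * xi + a l j * xj"
  assume "\<not> a l i * pairEq a i j + a l j * pairEq a j i < 1"
  then have A1: "A \<ge> 1" unfolding A_def xi_def xj_def by simp
  have on_i: "a i i * xi + a i j * xj = 1"
    unfolding xi_def xj_def using pairEq_solves pair_det_pos[OF i j ij] by simp
  have xi: "0 \<le> xi" "xi \<le> Ubound n a i"
    unfolding xi_def using pairEq_nonneg pairEq_le_Ubound i j ij by auto
  have xj: "0 \<le> xj" "xj \<le> Ubound n a j"
    unfolding xj_def using pairEq_nonneg pairEq_le_Ubound i j ij by auto
  have shrink: "y / A \<le> y" if "0 \<le> y" for y
  proof -
    have "y * 1 \<le> y * A" using that A1 by (rule mult_left_mono[rotated])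
    then show ?thesis using A1 by (simp add: divide_simps)
  qed
  define x where "x = (\<lambda>m. (if m = i then xi / A else 0) + (if m = j then xj / A else (0::real)))"
  have box: "inBox n a l x"
    using l ij xi xj A1 shrink[of xi] shrink[of xj] unfolding x_def
    by (intro inBox_support) auto
  have "alphaLV n a l x = a l i * (xi / A) + a l j * (xj / A)"
    unfolding x_def using alphaLV_pair[OF i j] by simp
  also have "\<dots> = (a l i * xi + a l j * xj) / A" by (simp add: add_divide_distrib)
  finally have "alphaLV n a l x = 1" using A1 unfolding A_def[symmetric] by simp
  with condC_all box l i have "alphaLV n a i x > 1" by (intro condC_excess) auto
  moreover have "alphaLV n a i x = 1 / A"
    unfolding x_def alphaLV_pair[OF i j] using on_i by (simp add: add_divide_distrib[symmetric])
  ultimately show False using A1 by simp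
qed

lemma third_species_bound:
  assumes "i \<in> {1..n}" "j \<in> {1..n}" "i \<noteq> j" "l \<in> {1..n} - {i, j}"
  shows "(a l i * (a j j - a i j) + a l j * (a i i - a j i)) / (a i i * a j j - a i j * a j i) < 1"
  using pairEq_below_third[OF assms] unfolding pairEq_swap[where i = i and j = j] pairEq_def[of a i j]
  by (simp add: add_divide_distrib)

lemma Ucand_le_pairEq:
  assumes jk: "j \<in> {1..n} - {i}" "k \<in> {1..n} - {i}" "a k j > a i j" and i: "i \<in> {1..n}"
  shows "(a k j - a i j) / (a i i * a k j - a i j * a k i) \<le> pairEq a i j"
proof (cases "k = j")
  case True
  then show ?thesis unfolding pairEq_def by simp
next
  case False
  have D: "0 < a i i * a j j - a i j * a j i" using pair_det_pos i jk by auto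
  have "0 < a i i * a k j - a i j * a k i"
    using diag_pos nonneg diag_dominance[of i k] i jk by (intro det_pos) auto
  moreover have "a k i * (a j j - a i j) + a k j * (a i i - a j i) < a i i * a j j - a i j * a j i"
    using third_species_bound[of i j k] i jk False D by (simp add: divide_less_eq)
  moreover have "0 \<le> a i j" using nonneg i jk by auto
  ultimately show ?thesis unfolding pairEq_def using D by (intro candidate_le)
qed

text \<open>In the first branch some a_ij vanishes, which makes the
  corresponding pairEq equal to 1/a_ii; the second branch is impossible; in the
  third, the candidates include all pairEq a i j and are dominated by them.\<close>
lemma Ubound_eq_Max:
  assumes n2: "n \<ge> 2" and i: "i \<in> {1..n}"
  shows "Ubound n a i = Max {pairEq a i j | j. j \<in> {1..n} - {i}}"
proof -
  define S where "S = {pairEq a i j | j. j \<in> {1..n} - {i}}"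
  have finS: "finite S" unfolding S_def by simp
  obtain j0 where j0: "j0 \<in> {1..n} - {i}"
    using n2 by (cases "i = 1") (auto intro: that[of 1] that[of 2])
  have neS: "S \<noteq> {}" unfolding S_def using j0 by blast
  have dom: "a j i < a i i \<and> a i j < a j j" if "j \<in> {1..n} - {i}" for j
    using diag_dominance that i by auto
  show ?thesis unfolding S_def[symmetric]
  proof (cases "\<exists>j\<in>{1..n} - {i}. a i i \<le> a j i \<or> a i j = 0")
    case True
    have le_inv: "pairEq a i j \<le> 1 / a i i" if "j \<in> {1..n} - {i}" for j
      unfolding pairEq_def using dom[OF that] diag_pos nonneg i that by (intro pairEq_le_inv) auto
    from True obtain j1 where j1: "j1 \<in> {1..n} - {i}" "a i j1 = 0" using dom by force
    have "pairEq a i j1 = 1 / a i i" using j1 dom[OF j1(1)] unfolding pairEq_def by simp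
    moreover have "pairEq a i j1 \<in> S" unfolding S_def using j1 by blast
    moreover have "\<forall>y\<in>S. y \<le> 1 / a i i" unfolding S_def using le_inv by blast
    ultimately have "Max S = 1 / a i i" using finS by (intro Max_eqI) auto
    then show "Ubound n a i = Max S" using Ubound_first[OF True] by simp
  next
    case c1: False
    show "Ubound n a i = Max S"
    proof (cases "(\<forall>j\<in>{1..n} - {i}. a j i < a i i) \<and>
                  (\<forall>j\<in>{1..n} - {i}. \<forall>k\<in>{1..n} - {i}. a j k \<le> a i k)")
      case True
      then have "a j0 j0 \<le> a i j0" using j0 by auto
      with dom[OF j0] show ?thesis by simp
    next
      case c2: False
      have ST: "S \<subseteq> Ucand n a i" unfolding S_def Ucand_def pairEq_def using dom by blast
      have "Max (Ucand n a i) \<in> Ucand n a i"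
        using ST neS finite_Ucand by (intro Max_in) auto
      then obtain j k where jk: "j \<in> {1..n} - {i}" "k \<in> {1..n} - {i}" "a k j > a i j"
        and max: "Max (Ucand n a i) = (a k j - a i j) / (a i i * a k j - a i j * a k i)"
        unfolding Ucand_def by blast
      have "Max (Ucand n a i) \<le> pairEq a i j" using max Ucand_le_pairEq[OF jk i] by simp
      also have "\<dots> \<le> Max S" using jk finS unfolding S_def by (intro Max_ge) auto
      finally have "Max (Ucand n a i) \<le> Max S" .
      moreover have "Max S \<le> Max (Ucand n a i)"
        using ST neS finite_Ucand by (rule Max_mono)
      ultimately show ?thesis using Ubound_third[OF c1 c2] by simp
    qed
  qed
qed

end

theorem mainTheorem8:
  fixes n :: nat and a :: "nat \<Rightarrow> nat \<Rightarrow> real" and b :: "nat \<Rightarrow> real"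
  assumes "n \<ge> 2"
    and "\<forall>i\<in>{1..n}. b i > 0"
    and "\<forall>i\<in>{1..n}. a i i > 0"
    and "\<forall>i\<in>{1..n}. \<forall>j\<in>{1..n}. a i j \<ge> 0"
    and "\<forall>k\<in>{1..n}. condC n a k"
  shows "(\<forall>i\<in>{1..n}. \<forall>j\<in>{1..n}. i \<noteq> j \<longrightarrow>
            a i i > a j i \<and> a j j > a i j \<and>
            (\<forall>l\<in>{1..n} - {i, j}.
               (a l i * (a j j - a i j) + a l j * (a i i - a j i)) / (a i i * a j j - a i j * a j i) < 1))
       \<and> (\<forall>i\<in>{1..n}. Ubound n a i =
            Max {(a j j - a i j) / (a i i * a j j - a i j * a j i) | j. j \<in> {1..n} - {i}})"
proof -
  interpret LV_condC n a
    using assms(3-5) by unfold_locales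
  show ?thesis
  proof (intro conjI ballI impI)
    fix i j assume "i \<in> {1..n}" "j \<in> {1..n}" "i \<noteq> j"
    then show "a i i > a j i" "a j j > a i j"
      and "\<And>l. l \<in> {1..n} - {i, j} \<Longrightarrow>
             (a l i * (a j j - a i j) + a l j * (a i i - a j i)) / (a i i * a j j - a i j * a j i) < 1"
      using diag_dominance third_species_bound by auto
  next
    fix i assume "i \<in> {1..n}"
    then show "Ubound n a i = Max {(a j j - a i j) / (a i i * a j j - a i j * a j i) | j. j \<in> {1..n} - {i}}"
      using Ubound_eq_Max[OF assms(1)] unfolding pairEq_def by blast
  qed
qed

end
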